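(* Let $\rho:\mathbb{Z}_{\ge 0}\to[0,1]$ be a mapping probability with $\rho(i)=o(1/i)$ as $i\to\infty$, and let $\sigma>0$. Suppose that $m=m(|S|)$ is such that, for a random set $S$ of source symbols, with probability $\sigma$ there exist at least $|S|$ non-empty coded symbols among the first $m$ coded symbols (indices $0,1,\dots,m-1$). Then $m=\omega(|S|)$, i.e., for every $\eta>0$ there exists $|S|_0$ such that $m>\eta|S|$ whenever $|S|>|S|_0$.
   Context: Model: a set $S$ of source symbols is encoded into an infinite sequence of coded symbols indexed by $i=0,1,2,\dots$. Each source symbol is mapped to the $i$-th coded symbol with probability $\rho(i)$ (the mapping probability), independently across source symbols and across indices. A coded symbol is non-empty if at least one source symbol is mapped to it. *)

theory Defs
  imports "HOL-Probability.Probability"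
begin

text \<open>Random mapping of source symbols to coded symbols, restricted to the
first m coded symbols (indices 0..m-1).  Source symbols are 0..n-1 (n = |S|).
A map f has f (j, i) = True iff source symbol j is mapped to coded symbol i;
each pair (j,i) is included independently with probability rho i.\<close>
definition coding_pmf :: "(nat \<Rightarrow> real) \<Rightarrow> nat \<Rightarrow> nat \<Rightarrow> (nat \<times> nat \<Rightarrow> bool) pmf" where
  "coding_pmf \<rho> n m = Pi_pmf ({..<n} \<times> {..<m}) False (\<lambda>(j, i). bernoulli_pmf (\<rho> i))"

definition nonempty_count :: "nat \<Rightarrow> nat \<Rightarrow> (nat \<times> nat \<Rightarrow> bool) \<Rightarrow> nat" where
  "nonempty_count n m f = card {i. i < m \<and> (\<exists>j<n. f (j, i))}"

end

theory Submission
  imports Defs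
begin

text \<open>By the union bound the i-th coded symbol is non-empty with probability at most
  min 1 (n \<rho>(i)), so the expected number of non-empty symbols among the first m is at most
  the sum of these bounds over i < m, and Markov's inequality turns the success hypothesis
  into the lower bound \<sigma> n for that sum.  If m \<le> \<eta> n, split the sum at K \<approx> \<delta> n: the
  first K terms contribute at most K, and since \<rho>(i) \<le> \<epsilon>/i eventually, each later term is
  at most \<epsilon> n / i \<le> \<epsilon> / \<delta>.  The sum is thus at most \<delta> n + \<eta> n \<epsilon> / \<delta> + O(1), which is
  below \<sigma> n for suitable \<delta>, \<epsilon> and large n.\<close>

lemma prob_coding_pmf_mapped:
  assumes "0 \<le> \<rho> i" "\<rho> i \<le> 1" "j < n" "i < m"
  shows "measure_pmf.prob (coding_pmf \<rho> n m) {f. f (j, i)} = \<rho> i"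
proof -
  have "measure_pmf.prob (coding_pmf \<rho> n m) {f. f (j, i)} =
      measure_pmf.prob (map_pmf (\<lambda>f. f (j, i)) (coding_pmf \<rho> n m)) {True}"
    by (simp add: vimage_def)
  also have "map_pmf (\<lambda>f. f (j, i)) (coding_pmf \<rho> n m) = bernoulli_pmf (\<rho> i)"
    unfolding coding_pmf_def using assms(3,4) by (subst Pi_pmf_component) auto
  finally show ?thesis using assms(1,2) by (simp add: measure_pmf_single)
qed

lemma prob_coding_pmf_nonempty_le:
  assumes "0 \<le> \<rho> i" "\<rho> i \<le> 1" "i < m"
  shows "measure_pmf.prob (coding_pmf \<rho> n m) {f. \<exists>j<n. f (j, i)} \<le> min 1 (real n * \<rho> i)"
proof -
  have "{f. \<exists>j<n. f (j, i)} = (\<Union>j<n. {f. f (j, i)})" by auto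
  then have "measure_pmf.prob (coding_pmf \<rho> n m) {f. \<exists>j<n. f (j, i)} \<le>
      (\<Sum>j<n. measure_pmf.prob (coding_pmf \<rho> n m) {f. f (j, i)})"
    by (simp add: measure_pmf.finite_measure_subadditive_finite)
  also have "\<dots> = real n * \<rho> i"
    using prob_coding_pmf_mapped assms by simp
  finally show ?thesis by simp
qed

lemma expectation_nonempty_count_le:
  assumes "\<And>i. 0 \<le> \<rho> i \<and> \<rho> i \<le> 1"
  shows "measure_pmf.expectation (coding_pmf \<rho> n m) (\<lambda>f. real (nonempty_count n m f))
    \<le> (\<Sum>i<m. min 1 (real n * \<rho> i))"
proof -
  let ?M = "coding_pmf \<rho> n m"
  let ?nonempty = "\<lambda>i. {f. \<exists>j<n. f (j, i)}"
  have count_eq: "real (nonempty_count n m f) = (\<Sum>i<m. indicator (?nonempty i) f)" for f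
  proof -
    have "{i. i < m \<and> (\<exists>j<n. f (j, i))} = {..<m} \<inter> {i. \<exists>j<n. f (j, i)}" by auto
    then show ?thesis
      unfolding nonempty_count_def by (simp add: indicator_def sum.If_cases)
  qed
  have "integrable ?M (indicator (?nonempty i) :: _ \<Rightarrow> real)" for i
    by (rule measure_pmf.integrable_const_bound[where B = 1]) auto
  then have "measure_pmf.expectation ?M (\<lambda>f. real (nonempty_count n m f))
      = (\<Sum>i<m. measure_pmf.expectation ?M (indicator (?nonempty i)))"
    unfolding count_eq by (rule Bochner_Integration.integral_sum)
  also have "\<dots> = (\<Sum>i<m. measure_pmf.prob ?M (?nonempty i))"
    by simp
  also have "\<dots> \<le> (\<Sum>i<m. min 1 (real n * \<rho> i))"
    using assms by (intro sum_mono prob_coding_pmf_nonempty_le) auto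
  finally show ?thesis .
qed

lemma prob_nonempty_count_ge_le:
  assumes "\<And>i. 0 \<le> \<rho> i \<and> \<rho> i \<le> 1"
  shows "measure_pmf.prob (coding_pmf \<rho> n m) {f. nonempty_count n m f \<ge> n} * real n
    \<le> (\<Sum>i<m. min 1 (real n * \<rho> i))"
proof (cases "n = 0")
  case True
  then show ?thesis by (simp add: sum_nonneg assms)
next
  case False
  let ?M = "coding_pmf \<rho> n m"
  let ?X = "\<lambda>f. real (nonempty_count n m f)"
  have "nonempty_count n m f \<le> m" for f
  proof -
    have "{i. i < m \<and> (\<exists>j<n. f (j, i))} \<subseteq> {..<m}" by auto
    then show ?thesis
      unfolding nonempty_count_def by (metis card_lessThan card_mono finite_lessThan)
  qed
  then have "integrable ?M ?X"
    by (intro measure_pmf.integrable_const_bound[where B = m]) simp_all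
  then have "measure ?M {f \<in> space ?M. ?X f \<ge> real n} \<le> measure_pmf.expectation ?M ?X / real n"
    using False by (intro integral_Markov_inequality_measure[where A = UNIV]) simp_all
  also have "\<dots> \<le> (\<Sum>i<m. min 1 (real n * \<rho> i)) / real n"
    by (intro divide_right_mono expectation_nonempty_count_le assms) simp
  finally show ?thesis using False by (simp add: field_simps)
qed

lemma sum_min_one_le_split:
  fixes x :: "nat \<Rightarrow> real"
  assumes "\<And>i. i \<ge> K \<Longrightarrow> x i \<le> c" "0 \<le> c"
  shows "(\<Sum>i<m. min 1 (x i)) \<le> real K + real m * c"
proof -
  have "(\<Sum>i<m. min 1 (x i)) \<le> (\<Sum>i<m. (if i < K then 1 else 0) + c)"
    using assms by (intro sum_mono) (auto simp: min_le_iff_disj)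
  also have "\<dots> = real (card ({..<m} \<inter> {..<K})) + real m * c"
    by (simp add: sum.distrib sum.If_cases lessThan_def)
  also have "card ({..<m} \<inter> {..<K}) \<le> K"
    by (metis card_lessThan card_mono finite_lessThan inf_le2)
  finally show ?thesis by simp
qed

lemma sum_min_one_little_o:
  fixes \<rho> :: "nat \<Rightarrow> real"
  assumes "\<rho> \<in> o(\<lambda>i. 1 / real i)" "\<eta> > 0" "\<epsilon> > 0"
  shows "\<exists>n0. \<forall>n\<ge>n0. \<forall>m. real m \<le> \<eta> * real n \<longrightarrow>
           (\<Sum>i<m. min 1 (real n * \<rho> i)) \<le> \<epsilon> * real n"
proof -
  define \<delta> where "\<delta> = \<epsilon> / 3"
  define \<epsilon>' where "\<epsilon>' = \<epsilon> * \<delta> / (3 * \<eta>)"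
  have "\<delta> > 0" "\<epsilon>' > 0" using assms by (simp_all add: \<delta>_def \<epsilon>'_def)
  have "eventually (\<lambda>i. norm (\<rho> i) \<le> \<epsilon>' * norm (1 / real i)) at_top"
    using landau_o.smallD[OF assms(1) \<open>\<epsilon>' > 0\<close>] .
  then obtain I where I: "\<And>i. i \<ge> I \<Longrightarrow> \<bar>\<rho> i\<bar> \<le> \<epsilon>' / real i"
    by (auto simp: eventually_at_top_linorder)
  show ?thesis
  proof (intro exI allI impI)
    fix n m
    assume n: "n \<ge> nat \<lceil>3 * (real I + 1) / \<epsilon>\<rceil>" and m: "real m \<le> \<eta> * real n"
    define K where "K = I + nat \<lceil>\<delta> * real n\<rceil>"
    have tail: "real n * \<rho> i \<le> \<epsilon>' / \<delta>" if "i \<ge> K" for i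
    proof (cases "n = 0")
      case False
      have i: "\<delta> * real n \<le> real i" "i \<ge> I" using \<open>i \<ge> K\<close> unfolding K_def by linarith+
      have "\<delta> * real n > 0" using False \<open>\<delta> > 0\<close> by simp
      then have "real i > 0" using i(1) by linarith
      have "real n * \<rho> i \<le> real n * (\<epsilon>' / real i)"
        using I[OF i(2)] by (intro mult_left_mono) auto
      also have "\<dots> \<le> (real i / \<delta>) * (\<epsilon>' / real i)"
        using i(1) \<open>\<delta> > 0\<close> \<open>\<epsilon>' > 0\<close> by (intro mult_right_mono) (simp_all add: field_simps)
      also have "\<dots> = \<epsilon>' / \<delta>"
        using \<open>real i > 0\<close> by simp
      finally show ?thesis .
    qed (use \<open>\<delta> > 0\<close> \<open>\<epsilon>' > 0\<close> in simp)
    have "real K \<le> real I + 1 + \<delta> * real n"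
      using of_int_ceiling_le_add_one[of "\<delta> * real n"] \<open>\<delta> > 0\<close>
      unfolding K_def by (simp add: of_nat_nat add.commute)
    have "(\<Sum>i<m. min 1 (real n * \<rho> i)) \<le> real K + real m * (\<epsilon>' / \<delta>)"
      using tail \<open>\<delta> > 0\<close> \<open>\<epsilon>' > 0\<close> by (intro sum_min_one_le_split) auto
    also have "\<dots> \<le> (real I + 1 + \<delta> * real n) + \<eta> * real n * (\<epsilon>' / \<delta>)"
      using \<open>real K \<le> real I + 1 + \<delta> * real n\<close> m \<open>\<delta> > 0\<close> \<open>\<epsilon>' > 0\<close>
      by (intro add_mono mult_right_mono) simp_all
    also have "\<eta> * real n * (\<epsilon>' / \<delta>) = \<epsilon> * real n / 3"
      using assms \<open>\<delta> > 0\<close> by (simp add: \<epsilon>'_def field_simps)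
    also have "real I + 1 \<le> \<epsilon> * real n / 3"
    proof -
      have "3 * (real I + 1) / \<epsilon> \<le> real n"
        using n real_nat_ceiling_ge[of "3 * (real I + 1) / \<epsilon>"] by linarith
      then show ?thesis using assms(3) by (simp add: field_simps)
    qed
    finally show "(\<Sum>i<m. min 1 (real n * \<rho> i)) \<le> \<epsilon> * real n"
      by (simp add: \<delta>_def)
  qed
qed

theorem lemma4p2:
  fixes \<rho> :: "nat \<Rightarrow> real" and \<sigma> :: real and m :: "nat \<Rightarrow> nat"
  assumes rho_range: "\<And>i. 0 \<le> \<rho> i \<and> \<rho> i \<le> 1"
    and rho_little_o: "\<rho> \<in> o(\<lambda>i. 1 / real i)"
    and sigma_pos: "\<sigma> > 0"
    and success: "\<And>n. measure_pmf.prob (coding_pmf \<rho> n (m n))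
                        {f. nonempty_count n (m n) f \<ge> n} \<ge> \<sigma>"
  shows "\<forall>\<eta>>0. \<exists>n0. \<forall>n>n0. real (m n) > \<eta> * real n"
proof (intro allI impI)
  fix \<eta> :: real
  assume "\<eta> > 0"
  from sum_min_one_little_o[OF rho_little_o this, of "\<sigma> / 2"] sigma_pos obtain n0 where n0:
    "\<And>n k. n \<ge> n0 \<Longrightarrow> real k \<le> \<eta> * real n \<Longrightarrow>
       (\<Sum>i<k. min 1 (real n * \<rho> i)) \<le> \<sigma> / 2 * real n"
    by auto
  have "real (m n) > \<eta> * real n" if "n > n0" for n
  proof (rule ccontr)
    assume "\<not> real (m n) > \<eta> * real n"
    then have "(\<Sum>i<m n. min 1 (real n * \<rho> i)) \<le> \<sigma> / 2 * real n"
      using that by (intro n0) auto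
    moreover have "\<sigma> * real n \<le> (\<Sum>i<m n. min 1 (real n * \<rho> i))"
      using mult_right_mono[OF success[of n], of "real n"]
        prob_nonempty_count_ge_le[of \<rho> n "m n", OF rho_range] by simp
    moreover have "\<sigma> * real n > 0"
      using that sigma_pos by simp
    ultimately show False
      by linarith
  qed
  then show "\<exists>n0. \<forall>n>n0. real (m n) > \<eta> * real n" by blast
qed

end
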